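(* Consider the linear MTE model ($M=1$, $h_1(u)=u-\frac12$) and fixed weights $(c_\mu,c_\rho)\ne(0,0)$, $c=(c_\mu,c_\rho,-c_\mu,-c_\rho)'$. For $(\theta,F)\in\mathcal P$ let $\lambda=c'\theta$ and $$S=[\partial_pg(\lambda)]\Sigma_p[\partial_pg(\lambda)]'+[\partial_{\beta_1}g(\lambda)]\Sigma_{\beta_1}[\partial_{\beta_1}g(\lambda)]'+[\partial_{\beta_0}g(\lambda)]\Sigma_{\beta_0}[\partial_{\beta_0}g(\lambda)]'.$$ Then $\inf_{(\theta,F)\in\mathcal P}\lambda_{\min}(S)>0$ and $\sup_{(\theta,F)\in\mathcal P}\lambda_{\max}(S)<\infty$, where $\lambda_{\min},\lambda_{\max}$ denote the smallest and largest eigenvalues.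
   Context: General MTE setup. Observables are $(Y,D,Z)$ with $Y\in\mathbb R$, $D\in\{0,1\}$, $Z$ discrete with support $\{z_0,\dots,z_K\}$. Fix an integer $M\ge1$ and known continuous functions $h_1,\dots,h_M$ on $(0,1)$; set $\lambda_{10}=\lambda_{00}\equiv1$ and for $m=1,\dots,M$, $p\in(0,1)$: $\lambda_{1m}(p)=\frac1p\int_0^p h_m(u)du$, $\lambda_{0m}(p)=\frac1{1-p}\int_p^1 h_m(u)du$. For $p=(p(z_0),\dots,p(z_K))'\in(0,1)^{K+1}$ let $A_d(p)$ be the $(K+1)\times(M+1)$ matrix with $(\ell,m)$ entry $\lambda_{dm}(p(z_\ell))$ ($\ell=0,\dots,K$; $m=0,\dots,M$), and $A(p)=\mathrm{diag}(A_1(p),A_0(p))\in\mathbb R^{2(K+1)\times 2(M+1)}$. Parameters: $\theta=(\theta_1',\theta_0')'$, $\theta_d=(\theta_{d0},\dots,\theta_{dM})'=(\mu_d,\rho_{d1},\dots,\rho_{dM})'$. For a distribution $F$ of $(Y,D,Z)$: $q_F(z_\ell)=P_F(Z=z_\ell)$, $p_F(z_\ell)=P_F(D=1\mid Z=z_\ell)$, $p_F=(p_F(z_0),\dots,p_F(z_K))'$, $q_F(1,z_\ell)=p_F(z_\ell)q_F(z_\ell)$, $q_F(0,z_\ell)=(1-p_F(z_\ell))q_F(z_\ell)$, $\beta_{F,d\ell}=E_F[Y\mid D=d,Z=z_\ell]$, $\beta_{F,d}=(\beta_{F,d0},\dots,\beta_{F,dK})'$, $\beta_F=(\beta_{F,1}',\beta_{F,0}')'$,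 $\sigma^2_{F,d\ell}=\mathrm{Var}_F(Y\mid D=d,Z=z_\ell)$, $A_F=A(p_F)$. Parameter space: fix $\delta,\zeta>0$, $\epsilon\in(0,1/2)$ and a compact $\Theta\subset\mathbb R^{2(M+1)}$ with nonempty interior. $\mathcal P$ is the set of pairs $(\theta,F)$ such that (i) $K\ge M$, $\theta\in\mathrm{int}(\Theta)$ and $A_F\theta=\beta_F$; (ii) $\sup_{d\in\{0,1\}}\sup_{\ell}E_F[|Y|^{2+\delta}\mid D=d,Z=z_\ell]\le\zeta$; (iii) $\epsilon\le p_F(z_\ell)\le 1-\epsilon$ for all $\ell$; (iv) $\epsilon\le q_F(z_\ell)\le1-\epsilon$ for all $\ell$; (v) $\sigma^2_{F,d\ell}\ge\epsilon$ for all $d,\ell$. Linear MTE moments. With $M=1$, $h_1(u)=u-\frac12$ and $c=(c_\mu,c_\rho,-c_\mu,-c_\rho)'$, for $k=1,\dots,K$ and given $(p,\beta)$ define $\Delta_\mu(z_0,z_k)=p(z_k)[\beta_{10}-\beta_{00}]-p(z_0)[\beta_{1k}-\beta_{0k}]+\beta_{1k}-\beta_{10}$, $\Delta_\rho(z_0,z_k)=2(\beta_{00}-\beta_{10}+\beta_{1k}-\beta_{0k})$ and $g_k(\lambda)=[p(z_k)-p(z_0)]\lambda-c_\mu\Delta_\mu(z_0,z_k)-c_\rho\Delta_\rho(z_0,z_k)$, viewed as a function of $(\lambda,p,\beta_1,\beta_0)$; $g(\lambda)=(g_1(\lambda),\dots,g_K(\lambda))'$. In this lemma, $\partial_xg(\lambda)$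 for $x\in\{p,\beta_1,\beta_0\}$ is the $K\times(K+1)$ Jacobian of $g(\lambda)$ with respect to $x$ evaluated at $(p_F,\beta_{F,1},\beta_{F,0})$; $\Sigma_p=\mathrm{diag}\{p_F(z_\ell)(1-p_F(z_\ell))/q_F(z_\ell)\}_\ell$ and $\Sigma_{\beta_d}=\mathrm{diag}\{\sigma^2_{F,d\ell}/q_F(d,z_\ell)\}_\ell$. *)

theory Defs
  imports "HOL-Probability.Probability" "Jordan_Normal_Form.Char_Poly"
begin

(* ---------- Observables: F is a distribution of (Y,D,Z) on real \<times> bool \<times> 'z ---------- *)
(* D = 1 is encoded as True, D = 0 as False.  d ranges over {0,1}::nat. *)

definition obs_sets :: "(real \<times> bool \<times> 'z) set set" where
  "obs_sets = sets (borel \<Otimes>\<^sub>M (count_space UNIV \<Otimes>\<^sub>M count_space UNIV))"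

definition Zev :: "(real \<times> bool \<times> 'z) measure \<Rightarrow> 'z \<Rightarrow> (real \<times> bool \<times> 'z) set" where
  "Zev F z = {w \<in> space F. snd (snd w) = z}"

definition cell :: "(real \<times> bool \<times> 'z) measure \<Rightarrow> nat \<Rightarrow> 'z \<Rightarrow> (real \<times> bool \<times> 'z) set" where
  "cell F d z = {w \<in> space F. fst (snd w) = (d = 1) \<and> snd (snd w) = z}"

definition qF :: "(real \<times> bool \<times> 'z) measure \<Rightarrow> 'z \<Rightarrow> real" where
  "qF F z = measure F (Zev F z)"

definition pF :: "(real \<times> bool \<times> 'z) measure \<Rightarrow> 'z \<Rightarrow> real" where
  "pF F z = measure F (cell F 1 z) / qF F z"

definition qdF :: "(real \<times> bool \<times> 'z) measure \<Rightarrow> nat \<Rightarrow> 'z \<Rightarrow> real" where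
  "qdF F d z = (if d = 1 then pF F z * qF F z else (1 - pF F z) * qF F z)"

definition betaF :: "(real \<times> bool \<times> 'z) measure \<Rightarrow> nat \<Rightarrow> 'z \<Rightarrow> real" where
  "betaF F d z = (\<integral>w. fst w * indicator (cell F d z) w \<partial>F) / measure F (cell F d z)"

definition sigma2F :: "(real \<times> bool \<times> 'z) measure \<Rightarrow> nat \<Rightarrow> 'z \<Rightarrow> real" where
  "sigma2F F d z = (\<integral>w. (fst w - betaF F d z)\<^sup>2 * indicator (cell F d z) w \<partial>F) / measure F (cell F d z)"

(* E[|Y|^(2+\<delta>) | D = d, Z = z] \<le> \<zeta>, written without division *)
definition moment_bound :: "(real \<times> bool \<times> 'z) measure \<Rightarrow> real \<Rightarrow> real \<Rightarrow> nat \<Rightarrow> 'z \<Rightarrow> bool" where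
  "moment_bound F \<delta> \<zeta> d z \<longleftrightarrow>
     (\<integral>\<^sup>+w. ennreal (\<bar>fst w\<bar> powr (2 + \<delta>)) * indicator (cell F d z) w \<partial>F)
       \<le> ennreal \<zeta> * emeasure F (cell F d z)"

definition h1 :: "real \<Rightarrow> real" where
  "h1 u = u - 1/2"

definition lam :: "nat \<Rightarrow> nat \<Rightarrow> real \<Rightarrow> real" where
  "lam d m p =
     (if m = 0 then 1
      else if d = 1 then (1 / p) * integral {0..p} h1
      else (1 / (1 - p)) * integral {p..1} h1)"

(* \<theta> = (\<theta>_1, \<theta>_0), \<theta>_d = (\<mu>_d, \<rho>_{d1});  thc \<theta> d m = \<theta>_{dm} *)
definition thc :: "(real \<times> real) \<times> (real \<times> real) \<Rightarrow> nat \<Rightarrow> nat \<Rightarrow> real" where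
  "thc \<theta> d m = (let t = (if d = 1 then fst \<theta> else snd \<theta>) in if m = 0 then fst t else snd t)"

(* (A(p) \<theta>) = \<beta>, row by row; pv, bv indexed by r = 0..K *)
definition A_eq :: "nat \<Rightarrow> (nat \<Rightarrow> real) \<Rightarrow> (real \<times> real) \<times> (real \<times> real) \<Rightarrow> (nat \<Rightarrow> nat \<Rightarrow> real) \<Rightarrow> bool" where
  "A_eq K pv \<theta> bv \<longleftrightarrow>
     (\<forall>d\<in>{0,1}. \<forall>r\<le>K. (\<Sum>m\<le>1. lam d m (pv r) * thc \<theta> d m) = bv d r)"

definition inP ::
  "nat \<Rightarrow> (nat \<Rightarrow> 'z) \<Rightarrow> real \<Rightarrow> real \<Rightarrow> real \<Rightarrow> ((real \<times> real) \<times> (real \<times> real)) set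
   \<Rightarrow> (real \<times> real) \<times> (real \<times> real) \<Rightarrow> (real \<times> bool \<times> 'z) measure \<Rightarrow> bool" where
  "inP K z \<delta> \<zeta> \<epsilon> \<Theta> \<theta> F \<longleftrightarrow>
     prob_space F \<and> sets F = obs_sets \<and>
     measure F {w \<in> space F. snd (snd w) \<in> z ` {0..K}} = 1 \<and>
     K \<ge> 1 \<and> \<theta> \<in> interior \<Theta> \<and>
     A_eq K (\<lambda>r. pF F (z r)) \<theta> (\<lambda>d r. betaF F d (z r)) \<and>
     (\<forall>d\<in>{0,1}. \<forall>r\<le>K. moment_bound F \<delta> \<zeta> d (z r)) \<and>
     (\<forall>r\<le>K. \<epsilon> \<le> pF F (z r) \<and> pF F (z r) \<le> 1 - \<epsilon>) \<and>
     (\<forall>r\<le>K. \<epsilon> \<le> qF F (z r) \<and> qF F (z r) \<le> 1 - \<epsilon>) \<and>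
     (\<forall>d\<in>{0,1}. \<forall>r\<le>K. sigma2F F d (z r) \<ge> \<epsilon>)"

definition Delta_mu :: "(nat \<Rightarrow> real) \<Rightarrow> (nat \<Rightarrow> real) \<Rightarrow> (nat \<Rightarrow> real) \<Rightarrow> nat \<Rightarrow> real" where
  "Delta_mu p b1 b0 k = p k * (b1 0 - b0 0) - p 0 * (b1 k - b0 k) + b1 k - b1 0"

definition Delta_rho :: "(nat \<Rightarrow> real) \<Rightarrow> (nat \<Rightarrow> real) \<Rightarrow> nat \<Rightarrow> real" where
  "Delta_rho b1 b0 k = 2 * (b0 0 - b1 0 + b1 k - b0 k)"

definition gk :: "real \<Rightarrow> real \<Rightarrow> nat \<Rightarrow> real \<Rightarrow> (nat \<Rightarrow> real) \<Rightarrow> (nat \<Rightarrow> real) \<Rightarrow> (nat \<Rightarrow> real) \<Rightarrow> real" where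
  "gk c_mu c_rho k l p b1 b0 =
     (p k - p 0) * l - c_mu * Delta_mu p b1 b0 k - c_rho * Delta_rho b1 b0 k"

definition Jp :: "real \<Rightarrow> real \<Rightarrow> real \<Rightarrow> (nat \<Rightarrow> real) \<Rightarrow> (nat \<Rightarrow> real) \<Rightarrow> (nat \<Rightarrow> real) \<Rightarrow> nat \<Rightarrow> nat \<Rightarrow> real" where
  "Jp c_mu c_rho l p b1 b0 k r = deriv (\<lambda>t. gk c_mu c_rho k l (p(r := p r + t)) b1 b0) 0"

definition Jb1 :: "real \<Rightarrow> real \<Rightarrow> real \<Rightarrow> (nat \<Rightarrow> real) \<Rightarrow> (nat \<Rightarrow> real) \<Rightarrow> (nat \<Rightarrow> real) \<Rightarrow> nat \<Rightarrow> nat \<Rightarrow> real" where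
  "Jb1 c_mu c_rho l p b1 b0 k r = deriv (\<lambda>t. gk c_mu c_rho k l p (b1(r := b1 r + t)) b0) 0"

definition Jb0 :: "real \<Rightarrow> real \<Rightarrow> real \<Rightarrow> (nat \<Rightarrow> real) \<Rightarrow> (nat \<Rightarrow> real) \<Rightarrow> (nat \<Rightarrow> real) \<Rightarrow> nat \<Rightarrow> nat \<Rightarrow> real" where
  "Jb0 c_mu c_rho l p b1 b0 k r = deriv (\<lambda>t. gk c_mu c_rho k l p b1 (b0(r := b0 r + t))) 0"

definition c_theta :: "real \<Rightarrow> real \<Rightarrow> (real \<times> real) \<times> (real \<times> real) \<Rightarrow> real" where
  "c_theta c_mu c_rho \<theta> = c_mu * thc \<theta> 1 0 + c_rho * thc \<theta> 1 1 - c_mu * thc \<theta> 0 0 - c_rho * thc \<theta> 0 1"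

(* The K \<times> K matrix S; matrix index i < K corresponds to moment k = i + 1 *)
definition S_mat :: "nat \<Rightarrow> (nat \<Rightarrow> 'z) \<Rightarrow> real \<Rightarrow> real \<Rightarrow> (real \<times> real) \<times> (real \<times> real)
                     \<Rightarrow> (real \<times> bool \<times> 'z) measure \<Rightarrow> real mat" where
  "S_mat K z c_mu c_rho \<theta> F =
     (let l = c_theta c_mu c_rho \<theta>;
          p = (\<lambda>r. pF F (z r));
          b1 = (\<lambda>r. betaF F 1 (z r));
          b0 = (\<lambda>r. betaF F 0 (z r));
          Sp = (\<lambda>r. pF F (z r) * (1 - pF F (z r)) / qF F (z r));
          Sb1 = (\<lambda>r. sigma2F F 1 (z r) / qdF F 1 (z r));
          Sb0 = (\<lambda>r. sigma2F F 0 (z r) / qdF F 0 (z r))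
      in mat K K (\<lambda>(i, j).
           (\<Sum>r\<le>K. Jp c_mu c_rho l p b1 b0 (i+1) r * Sp r * Jp c_mu c_rho l p b1 b0 (j+1) r)
         + (\<Sum>r\<le>K. Jb1 c_mu c_rho l p b1 b0 (i+1) r * Sb1 r * Jb1 c_mu c_rho l p b1 b0 (j+1) r)
         + (\<Sum>r\<le>K. Jb0 c_mu c_rho l p b1 b0 (i+1) r * Sb0 r * Jb0 c_mu c_rho l p b1 b0 (j+1) r)))"

end

theory Submission
  imports Defs
begin

text \<open>
  The matrix \<open>S\<close> is a sum of three Gram matrices \<open>J W J'\<close> with nonnegative diagonal
  weights \<open>W\<close>. Row \<open>k\<close> of \<open>\<partial>\<^sub>\<beta>\<^sub>1g\<close> and of \<open>\<partial>\<^sub>\<beta>\<^sub>0g\<close> has nonzero entries only in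
  column \<open>0\<close> and in the diagonal column \<open>k\<close>, and the diagonal entries
  \<open>-c\<^sub>\<mu>(1 - p(z\<^sub>0)) - 2c\<^sub>\<rho>\<close> and \<open>2c\<^sub>\<rho> - c\<^sub>\<mu>p(z\<^sub>0)\<close> do not depend on \<open>k\<close>. Discarding
  column \<open>0\<close> and the \<open>p\<close>-part, the Rayleigh quotient of \<open>S\<close> is at least the smallest
  \<open>\<beta>\<close>-weight \<open>\<sigma>\<^sup>2/q \<ge> \<epsilon>\<close> times the sum of the squares of these two entries. They add up
  to \<open>-c\<^sub>\<mu>\<close>, so that sum is at least \<open>c\<^sub>\<mu>\<^sup>2/2\<close>, and it equals \<open>8c\<^sub>\<rho>\<^sup>2\<close> when \<open>c\<^sub>\<mu> = 0\<close>.

  For the upper bound, compactness of \<open>\<Theta>\<close> bounds \<open>\<theta>\<close>, hence \<open>\<lambda> = c'\<theta>\<close> and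
  \<open>\<beta> = A(p)\<theta>\<close>, and through the moment condition also \<open>\<sigma>\<^sup>2\<close>. Together with \<open>p, q \<ge> \<epsilon>\<close>
  this bounds every entry of \<open>S\<close> uniformly, and an eigenvalue of a \<open>K \<times> K\<close> matrix is
  at most \<open>K\<close> times its largest entry.
\<close>

section \<open>Eigenvalue bounds through entries and quadratic forms\<close>

lemma eigenvalue_matE:
  fixes f :: "nat \<Rightarrow> nat \<Rightarrow> 'a::field"
  assumes "eigenvalue (mat K K (\<lambda>(i, j). f i j)) e"
  obtains x where "\<And>i. i < K \<Longrightarrow> e * x i = (\<Sum>j<K. f i j * x j)" and "\<exists>i<K. x i \<noteq> 0"
proof -
  from assms obtain v where v: "v \<in> carrier_vec K" "v \<noteq> 0\<^sub>v K"
    and eq: "mat K K (\<lambda>(i, j). f i j) *\<^sub>v v = e \<cdot>\<^sub>v v"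
    by (auto simp: eigenvalue_def eigenvector_def)
  have "e * vec_index v i = (\<Sum>j<K. f i j * vec_index v j)" if "i < K" for i
    using arg_cong[OF eq, of "\<lambda>u. vec_index u i"] that v(1)
    by (simp add: scalar_prod_def lessThan_atLeast0)
  moreover have "\<exists>i<K. vec_index v i \<noteq> 0"
    using v by (auto intro!: eq_vecI)
  ultimately show thesis by (rule that)
qed

lemma eigenvalue_ge_if_quadratic_form_ge:
  fixes f :: "nat \<Rightarrow> nat \<Rightarrow> real"
  assumes "eigenvalue (mat K K (\<lambda>(i, j). f i j)) e"
    and "\<And>x. L * (\<Sum>i<K. (x i)\<^sup>2) \<le> (\<Sum>i<K. \<Sum>j<K. x i * f i j * x j)"
  shows "L \<le> e"
proof -
  obtain x where x: "\<And>i. i < K \<Longrightarrow> e * x i = (\<Sum>j<K. f i j * x j)" and "\<exists>i<K. x i \<noteq> 0"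
    using eigenvalue_matE[OF assms(1)] by blast
  then obtain i where "i < K" "x i \<noteq> 0"
    by blast
  then have pos: "0 < (\<Sum>i<K. (x i)\<^sup>2)"
    by (intro sum_pos2[of _ i]) auto
  have "L * (\<Sum>i<K. (x i)\<^sup>2) \<le> (\<Sum>i<K. x i * (\<Sum>j<K. f i j * x j))"
    using assms(2)[of x] by (simp add: sum_distrib_left mult_ac)
  also have "\<dots> = (\<Sum>i<K. x i * (e * x i))"
    by (intro sum.cong refl) (simp add: x)
  also have "\<dots> = e * (\<Sum>i<K. (x i)\<^sup>2)"
    by (simp add: sum_distrib_left power2_eq_square mult_ac)
  finally show ?thesis
    using pos by simp
qed

lemma abs_eigenvalue_le_if_entries_le:
  fixes f :: "nat \<Rightarrow> nat \<Rightarrow> real"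
  assumes "eigenvalue (mat K K (\<lambda>(i, j). f i j)) e"
    and "\<And>i j. i < K \<Longrightarrow> j < K \<Longrightarrow> \<bar>f i j\<bar> \<le> C"
  shows "\<bar>e\<bar> \<le> real K * C"
proof -
  obtain x where x: "\<And>i. i < K \<Longrightarrow> e * x i = (\<Sum>j<K. f i j * x j)" and "\<exists>i<K. x i \<noteq> 0"
    using eigenvalue_matE[OF assms(1)] by blast
  define m where "m = Max ((\<lambda>j. \<bar>x j\<bar>) ` {..<K})"
  have "m \<in> (\<lambda>j. \<bar>x j\<bar>) ` {..<K}"
    unfolding m_def using \<open>\<exists>i<K. x i \<noteq> 0\<close> by (intro Max_in) auto
  then obtain i where i: "i < K" "\<bar>x i\<bar> = m"
    by auto
  have max: "\<bar>x j\<bar> \<le> m" if "j < K" for j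
    using that by (auto simp: m_def)
  have "0 < m"
    using \<open>\<exists>i<K. x i \<noteq> 0\<close> max by force
  have "\<bar>e\<bar> * m = \<bar>\<Sum>j<K. f i j * x j\<bar>"
    using x[OF i(1)] i(2) by (metis abs_mult)
  also have "\<dots> \<le> (\<Sum>j<K. C * m)"
    using assms(2)[OF i(1)] max
    by (intro order_trans[OF sum_abs] sum_mono) (auto simp: abs_mult intro!: mult_mono')
  also have "\<dots> = real K * C * m"
    by simp
  finally show ?thesis
    using \<open>0 < m\<close> by simp
qed

lemma quadratic_form_weighted_gram:
  fixes x w :: "nat \<Rightarrow> real" and P :: "nat \<Rightarrow> nat \<Rightarrow> real"
  shows "(\<Sum>i<K. \<Sum>j<K. x i * (\<Sum>r\<le>N. P i r * w r * P j r) * x j) = (\<Sum>r\<le>N. w r * (\<Sum>i<K. x i * P i r)\<^sup>2)"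
proof -
  have "(\<Sum>i<K. \<Sum>j<K. x i * (\<Sum>r\<le>N. P i r * w r * P j r) * x j)
      = (\<Sum>i<K. \<Sum>j<K. \<Sum>r\<le>N. w r * (x i * P i r) * (x j * P j r))"
    by (intro sum.cong refl) (simp add: sum_distrib_left sum_distrib_right mult_ac)
  also have "\<dots> = (\<Sum>i<K. \<Sum>r\<le>N. \<Sum>j<K. w r * (x i * P i r) * (x j * P j r))"
    by (intro sum.cong refl sum.swap)
  also have "\<dots> = (\<Sum>r\<le>N. \<Sum>i<K. \<Sum>j<K. w r * (x i * P i r) * (x j * P j r))"
    by (rule sum.swap)
  also have "\<dots> = (\<Sum>r\<le>N. w r * (\<Sum>i<K. x i * P i r)\<^sup>2)"
    by (simp add: power2_eq_square sum_distrib_left sum_distrib_right mult_ac)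
  finally show ?thesis .
qed

lemma weighted_square_sum_ge_diagonal:
  fixes x w :: "nat \<Rightarrow> real"
  assumes "\<And>r. r \<le> K \<Longrightarrow> \<eta> \<le> w r" and "0 \<le> \<eta>"
    and "\<And>i r. i < K \<Longrightarrow> 0 < r \<Longrightarrow> P i r = (if r = Suc i then Y else 0)"
  shows "\<eta> * Y\<^sup>2 * (\<Sum>i<K. (x i)\<^sup>2) \<le> (\<Sum>r\<le>K. w r * (\<Sum>i<K. x i * P i r)\<^sup>2)"
proof -
  have col: "(\<Sum>i<K. x i * P i (Suc k)) = x k * Y" if "k < K" for k
  proof -
    have "(\<Sum>i<K. x i * P i (Suc k)) = (\<Sum>i<K. if i = k then x k * Y else 0)"
      using assms(3) by (intro sum.cong) auto
    then show ?thesis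
      using that by simp
  qed
  have "\<eta> * Y\<^sup>2 * (\<Sum>i<K. (x i)\<^sup>2) = (\<Sum>k<K. \<eta> * (x k * Y)\<^sup>2)"
    by (simp add: sum_distrib_left power_mult_distrib mult_ac)
  also have "\<dots> \<le> (\<Sum>k<K. w (Suc k) * (\<Sum>i<K. x i * P i (Suc k))\<^sup>2)"
    using assms(1) by (intro sum_mono) (simp add: col mult_right_mono)
  also have "\<dots> = (\<Sum>r\<in>Suc ` {..<K}. w r * (\<Sum>i<K. x i * P i r)\<^sup>2)"
    by (simp add: sum.reindex)
  also have "\<dots> \<le> (\<Sum>r\<le>K. w r * (\<Sum>i<K. x i * P i r)\<^sup>2)"
    using assms(1,2) by (intro sum_mono2) (auto intro!: mult_nonneg_nonneg dest: order_trans)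
  finally show ?thesis .
qed

lemma abs_weighted_gram_le:
  fixes P Q w :: "nat \<Rightarrow> real"
  assumes "\<And>r. r \<le> N \<Longrightarrow> \<bar>P r\<bar> \<le> c" "\<And>r. r \<le> N \<Longrightarrow> \<bar>Q r\<bar> \<le> c"
    and "\<And>r. r \<le> N \<Longrightarrow> 0 \<le> w r" "\<And>r. r \<le> N \<Longrightarrow> w r \<le> W"
  shows "\<bar>\<Sum>r\<le>N. P r * w r * Q r\<bar> \<le> (real N + 1) * (c * W * c)"
proof -
  have "0 \<le> c" "0 \<le> W"
    using assms(1,3,4)[of 0] by auto
  have "\<bar>\<Sum>r\<le>N. P r * w r * Q r\<bar> \<le> (\<Sum>r\<le>N. \<bar>P r\<bar> * w r * \<bar>Q r\<bar>)"
    using sum_abs[of "\<lambda>r. P r * w r * Q r" "{..N}"] assms(3) by (simp add: abs_mult)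
  also have "\<dots> \<le> (\<Sum>r\<le>N. c * W * c)"
    using assms \<open>0 \<le> c\<close> \<open>0 \<le> W\<close> by (intro sum_mono mult_mono) auto
  also have "\<dots> = (real N + 1) * (c * W * c)"
    by simp
  finally show ?thesis .
qed

lemma abs_add3_le:
  fixes a b c C :: real
  shows "\<bar>a\<bar> \<le> C \<Longrightarrow> \<bar>b\<bar> \<le> C \<Longrightarrow> \<bar>c\<bar> \<le> C \<Longrightarrow> \<bar>a + b + c\<bar> \<le> 3 * C"
  by linarith

section \<open>Bounding the conditional variance\<close>

lemma sets_cell:
  assumes "sets F = obs_sets"
  shows "cell F d z \<in> sets F"
proof -
  have "cell F d z = snd -` ({d = 1} \<times> {z}) \<inter> space F"
    by (auto simp: cell_def prod_eq_iff)
  moreover have "snd \<in> measurable F (count_space UNIV \<Otimes>\<^sub>M count_space UNIV)"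
    by (subst measurable_cong_sets[OF assms[unfolded obs_sets_def] refl]) simp
  moreover have "{d = 1} \<times> {z} \<in> sets (count_space UNIV \<Otimes>\<^sub>M count_space UNIV)"
    by (intro pair_measureI) auto
  ultimately show ?thesis
    by (metis measurable_sets)
qed

lemma borel_measurable_abs_fst_powr:
  assumes "sets F = obs_sets"
  shows "(\<lambda>w. ennreal (\<bar>fst w\<bar> powr a)) \<in> borel_measurable F"
  by (subst measurable_cong_sets[OF assms[unfolded obs_sets_def] refl]) measurable

lemma square_diff_le_powr:
  fixes y b \<delta> :: real
  assumes "0 < \<delta>"
  shows "(y - b)\<^sup>2 \<le> 2 + 2 * b\<^sup>2 + 2 * \<bar>y\<bar> powr (2 + \<delta>)"
proof -
  have "y\<^sup>2 \<le> 1 + \<bar>y\<bar> powr (2 + \<delta>)"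
  proof (cases "\<bar>y\<bar> \<le> 1")
    case True
    then have "y\<^sup>2 \<le> 1" by (simp add: abs_le_square_iff[of y 1, simplified])
    then show ?thesis by (simp add: add_increasing2)
  next
    case False
    then have "\<bar>y\<bar> powr 2 \<le> \<bar>y\<bar> powr (2 + \<delta>)" using assms by (intro powr_mono) auto
    then show ?thesis using False by simp
  qed
  moreover have "(y - b)\<^sup>2 \<le> 2 * y\<^sup>2 + 2 * b\<^sup>2"
    using sum_squares_ge_zero[of "y + b" 0] by (simp add: power2_eq_square algebra_simps)
  ultimately show ?thesis by linarith
qed

lemma sigma2F_le:
  fixes F :: "(real \<times> bool \<times> 'z) measure"
  assumes "finite_measure F" and sets_F: "sets F = obs_sets"
    and moment: "moment_bound F \<delta> \<zeta> d z" and "0 < \<delta>" "0 \<le> \<zeta>"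
  shows "sigma2F F d z \<le> 2 + 2 * (betaF F d z)\<^sup>2 + 2 * \<zeta>"
proof -
  interpret finite_measure F by fact
  define b C R where "b = betaF F d z" and "C = cell F d z" and "R = 2 + 2 * b\<^sup>2 + 2 * \<zeta>"
  have C: "C \<in> sets F" unfolding C_def using sets_F by (rule sets_cell)
  have "(\<integral>\<^sup>+w. ennreal ((fst w - b)\<^sup>2 * indicator C w) \<partial>F)
      \<le> (\<integral>\<^sup>+w. ennreal (2 + 2 * b\<^sup>2) * indicator C w
                 + 2 * (ennreal (\<bar>fst w\<bar> powr (2 + \<delta>)) * indicator C w) \<partial>F)"
  proof (rule nn_integral_mono)
    fix w :: "real \<times> bool \<times> 'z"
    have "ennreal ((fst w - b)\<^sup>2) \<le> ennreal (2 + 2 * b\<^sup>2 + 2 * \<bar>fst w\<bar> powr (2 + \<delta>))"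
      using square_diff_le_powr[OF \<open>0 < \<delta>\<close>] by (rule ennreal_leI)
    also have "\<dots> = ennreal (2 + 2 * b\<^sup>2) + 2 * ennreal (\<bar>fst w\<bar> powr (2 + \<delta>))"
      by (simp add: ennreal_mult)
    finally show "ennreal ((fst w - b)\<^sup>2 * indicator C w)
        \<le> ennreal (2 + 2 * b\<^sup>2) * indicator C w + 2 * (ennreal (\<bar>fst w\<bar> powr (2 + \<delta>)) * indicator C w)"
      by (auto split: split_indicator)
  qed
  also have "\<dots> = ennreal (2 + 2 * b\<^sup>2) * emeasure F C
      + 2 * (\<integral>\<^sup>+w. ennreal (\<bar>fst w\<bar> powr (2 + \<delta>)) * indicator C w \<partial>F)"
    using C borel_measurable_abs_fst_powr[OF sets_F]
    by (subst nn_integral_add) (auto simp: nn_integral_cmult_indicator nn_integral_cmult)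
  also have "\<dots> \<le> ennreal (2 + 2 * b\<^sup>2) * emeasure F C + 2 * (ennreal \<zeta> * emeasure F C)"
    using moment by (intro add_left_mono mult_left_mono) (auto simp: moment_bound_def C_def)
  also have "\<dots> = ennreal (R * measure F C)"
    using \<open>0 \<le> \<zeta>\<close>
    by (simp add: R_def emeasure_eq_measure ennreal_mult algebra_simps)
  finally have "(\<integral>w. (fst w - b)\<^sup>2 * indicator C w \<partial>F) \<le> R * measure F C"
    using \<open>0 \<le> \<zeta>\<close> by (intro integral_real_bounded) (auto simp: R_def)
  moreover have "0 \<le> R" using \<open>0 \<le> \<zeta>\<close> by (simp add: R_def)
  ultimately show ?thesis
    by (cases "measure F C = 0") (auto simp: sigma2F_def b_def C_def R_def divide_le_eq)
qed

section \<open>The linear MTE model\<close>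

lemma integral_h1:
  assumes "a \<le> b"
  shows "integral {a..b} h1 = (b\<^sup>2 - b - a\<^sup>2 + a) / 2"
proof -
  have "(h1 has_integral ((b\<^sup>2 / 2 - b / 2) - (a\<^sup>2 / 2 - a / 2))) {a..b}"
    using assms unfolding h1_def
    by (intro fundamental_theorem_of_calculus)
       (auto intro!: derivative_eq_intros simp flip: has_real_derivative_iff_has_vector_derivative)
  then show ?thesis by (simp add: integral_unique diff_divide_distrib)
qed

lemma lam_1_eq:
  assumes "0 < p" "p < 1"
  shows "lam d 1 p = (if d = 1 then (p - 1) / 2 else p / 2)"
  using assms by (simp add: lam_def integral_h1 field_simps power2_eq_square)

lemma abs_lam_1_le:
  assumes "0 < p" "p < 1"
  shows "\<bar>lam d 1 p\<bar> \<le> 1"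
  using lam_1_eq[OF assms, of d] assms by auto

lemma abs_thc_le_norm: "\<bar>thc \<theta> d m\<bar> \<le> norm \<theta>"
proof -
  obtain a b c e where \<theta>: "\<theta> = ((a, b), (c, e))" by (metis prod.collapse)
  have "norm (a, b) \<le> norm \<theta>" "norm (c, e) \<le> norm \<theta>"
    unfolding \<theta> by (rule norm_fst_le, rule norm_snd_le)
  moreover have "\<bar>a\<bar> \<le> norm (a, b)" "\<bar>b\<bar> \<le> norm (a, b)" "\<bar>c\<bar> \<le> norm (c, e)" "\<bar>e\<bar> \<le> norm (c, e)"
    using norm_fst_le[of a b] norm_snd_le[of b a] norm_fst_le[of c e] norm_snd_le[of e c] by auto
  ultimately show ?thesis unfolding thc_def Let_def \<theta> by auto
qed

lemma abs_c_theta_le: "\<bar>c_theta cm cr \<theta>\<bar> \<le> 2 * (\<bar>cm\<bar> + \<bar>cr\<bar>) * norm \<theta>"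
proof -
  have "\<bar>c * thc \<theta> d m\<bar> \<le> \<bar>c\<bar> * norm \<theta>" for c d m
    unfolding abs_mult by (intro mult_left_mono abs_thc_le_norm) auto
  from this[of cm 1 0] this[of cr 1 1] this[of cm 0 0] this[of cr 0 1] show ?thesis
    unfolding c_theta_def by (simp only: distrib_left distrib_right) linarith
qed

lemma A_eq_abs_le:
  assumes "A_eq K pv \<theta> bv" "d \<in> {0, 1}" "r \<le> K" "0 < pv r" "pv r < 1"
  shows "\<bar>bv d r\<bar> \<le> 2 * norm \<theta>"
proof -
  have "bv d r = thc \<theta> d 0 + lam d 1 (pv r) * thc \<theta> d 1"
    using assms(1-3) by (auto simp: A_eq_def lam_def)
  moreover have "\<bar>lam d 1 (pv r) * thc \<theta> d 1\<bar> \<le> 1 * norm \<theta>"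
    unfolding abs_mult using assms(4,5) by (intro mult_mono abs_lam_1_le abs_thc_le_norm) auto
  ultimately show ?thesis using abs_thc_le_norm[of \<theta> d 0] by linarith
qed

lemma deriv_affine: "deriv (\<lambda>t::real. a + t * d) 0 = d"
  by (rule DERIV_imp_deriv) (auto intro!: derivative_eq_intros)

lemma Jp_eq:
  assumes "k \<noteq> 0"
  shows "Jp cm cr l p b1 b0 k r =
    (if r = 0 then - l + cm * (b1 k - b0 k) else if r = k then l - cm * (b1 0 - b0 0) else 0)"
proof -
  have "(\<lambda>t. gk cm cr k l (p(r := p r + t)) b1 b0) = (\<lambda>t. gk cm cr k l p b1 b0 + t *
    (if r = 0 then - l + cm * (b1 k - b0 k) else if r = k then l - cm * (b1 0 - b0 0) else 0))"
    using assms by (auto simp: gk_def Delta_mu_def Delta_rho_def algebra_simps)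
  then show ?thesis unfolding Jp_def by (simp add: deriv_affine)
qed

lemma Jb1_eq:
  assumes "k \<noteq> 0"
  shows "Jb1 cm cr l p b1 b0 k r =
    (if r = 0 then cm * (1 - p k) + 2 * cr else if r = k then - cm * (1 - p 0) - 2 * cr else 0)"
proof -
  have "(\<lambda>t. gk cm cr k l p (b1(r := b1 r + t)) b0) = (\<lambda>t. gk cm cr k l p b1 b0 + t *
    (if r = 0 then cm * (1 - p k) + 2 * cr else if r = k then - cm * (1 - p 0) - 2 * cr else 0))"
    using assms by (auto simp: gk_def Delta_mu_def Delta_rho_def algebra_simps)
  then show ?thesis unfolding Jb1_def by (simp add: deriv_affine)
qed

lemma Jb0_eq:
  assumes "k \<noteq> 0"
  shows "Jb0 cm cr l p b1 b0 k r =
    (if r = 0 then cm * p k - 2 * cr else if r = k then 2 * cr - cm * p 0 else 0)"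
proof -
  have "(\<lambda>t. gk cm cr k l p b1 (b0(r := b0 r + t))) = (\<lambda>t. gk cm cr k l p b1 b0 + t *
    (if r = 0 then cm * p k - 2 * cr else if r = k then 2 * cr - cm * p 0 else 0))"
    using assms by (auto simp: gk_def Delta_mu_def Delta_rho_def algebra_simps)
  then show ?thesis unfolding Jb0_def by (simp add: deriv_affine)
qed

lemma abs_Jp_le:
  assumes "k \<noteq> 0" "\<bar>b1 0 - b0 0\<bar> \<le> D" "\<bar>b1 k - b0 k\<bar> \<le> D"
  shows "\<bar>Jp cm cr l p b1 b0 k r\<bar> \<le> \<bar>l\<bar> + \<bar>cm\<bar> * D"
proof -
  have "\<bar>cm * (b1 0 - b0 0)\<bar> \<le> \<bar>cm\<bar> * D" "\<bar>cm * (b1 k - b0 k)\<bar> \<le> \<bar>cm\<bar> * D"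
    using assms by (auto simp: abs_mult intro: mult_left_mono)
  then show ?thesis
    using assms(1) by (auto simp: Jp_eq)
qed

lemma abs_Jb1_le:
  assumes "k \<noteq> 0" "p 0 \<in> {0..1}" "p k \<in> {0..1}"
  shows "\<bar>Jb1 cm cr l p b1 b0 k r\<bar> \<le> \<bar>cm\<bar> + 2 * \<bar>cr\<bar>"
proof -
  have "\<bar>cm * (1 - p 0)\<bar> \<le> \<bar>cm\<bar>" "\<bar>cm * (1 - p k)\<bar> \<le> \<bar>cm\<bar>"
    using assms by (auto simp: abs_mult intro: mult_left_le)
  then show ?thesis
    using assms(1) by (auto simp: Jb1_eq)
qed

lemma abs_Jb0_le:
  assumes "k \<noteq> 0" "p 0 \<in> {0..1}" "p k \<in> {0..1}"
  shows "\<bar>Jb0 cm cr l p b1 b0 k r\<bar> \<le> \<bar>cm\<bar> + 2 * \<bar>cr\<bar>"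
proof -
  have "\<bar>cm * p 0\<bar> \<le> \<bar>cm\<bar>" "\<bar>cm * p k\<bar> \<le> \<bar>cm\<bar>"
    using assms by (auto simp: abs_mult intro: mult_left_le)
  then show ?thesis
    using assms(1) by (auto simp: Jb0_eq)
qed

lemma Jb_diagonal_sum_squares_ge:
  fixes cm cr p0 :: real
  shows "(if cm = 0 then 8 * cr\<^sup>2 else cm\<^sup>2 / 2) \<le> (- cm * (1 - p0) - 2 * cr)\<^sup>2 + (2 * cr - cm * p0)\<^sup>2"
proof (cases "cm = 0")
  case True
  then show ?thesis by (simp add: power2_eq_square)
next
  case False
  define u v where "u = - cm * (1 - p0) - 2 * cr" and "v = 2 * cr - cm * p0"
  have "u + v = - cm"
    by (simp add: u_def v_def algebra_simps)
  moreover have "0 \<le> (u - v)\<^sup>2"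
    by simp
  then have "(u + v)\<^sup>2 \<le> 2 * (u\<^sup>2 + v\<^sup>2)"
    by (simp add: power2_eq_square algebra_simps)
  ultimately show ?thesis
    using False by (simp add: u_def v_def)
qed

section \<open>Uniform bounds on the parameter space\<close>

lemma le_divide_mult_of_le_one:
  fixes s a q :: real
  assumes "0 \<le> s" "0 < a" "a \<le> 1" "0 < q" "q \<le> 1"
  shows "s \<le> s / (a * q)"
proof -
  have "s * (a * q) \<le> s"
    using assms by (simp add: mult_le_one mult_left_le)
  then show ?thesis
    using assms by (simp add: le_divide_eq)
qed

lemma divide_mult_le_divide_square:
  fixes s a q \<epsilon> C :: real
  assumes "0 < \<epsilon>" "\<epsilon> \<le> a" "\<epsilon> \<le> q" "0 \<le> s" "s \<le> C"
  shows "s / (a * q) \<le> C / \<epsilon>\<^sup>2"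
proof -
  have "\<epsilon>\<^sup>2 \<le> a * q"
    unfolding power2_eq_square using assms by (intro mult_mono) auto
  then show ?thesis
    using assms by (intro frac_le) auto
qed

lemma inP_abs_betaF_le:
  assumes "inP K z \<delta> \<zeta> \<epsilon> \<Theta> \<theta> F" "0 < \<epsilon>" "d \<in> {0, 1}" "r \<le> K"
  shows "\<bar>betaF F d (z r)\<bar> \<le> 2 * norm \<theta>"
  using assms by (intro A_eq_abs_le[where pv = "\<lambda>r. pF F (z r)" and bv = "\<lambda>d r. betaF F d (z r)"]) (auto simp: inP_def)

lemma inP_sigma2F_le:
  assumes "inP K z \<delta> \<zeta> \<epsilon> \<Theta> \<theta> F" "0 < \<epsilon>" "0 < \<delta>" "0 \<le> \<zeta>" "d \<in> {0, 1}" "r \<le> K"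
  shows "sigma2F F d (z r) \<le> 2 + 8 * (norm \<theta>)\<^sup>2 + 2 * \<zeta>"
proof -
  have "sigma2F F d (z r) \<le> 2 + 2 * (betaF F d (z r))\<^sup>2 + 2 * \<zeta>"
    using assms by (intro sigma2F_le[where \<delta> = \<delta>] prob_space.axioms(1)) (auto simp: inP_def)
  moreover have "(betaF F d (z r))\<^sup>2 \<le> (2 * norm \<theta>)\<^sup>2"
    using inP_abs_betaF_le[OF assms(1,2,5,6)] by (metis abs_ge_zero power2_abs power_mono)
  ultimately show ?thesis
    by (simp add: power_mult_distrib)
qed

lemma inP_qdF_factor:
  assumes "inP K z \<delta> \<zeta> \<epsilon> \<Theta> \<theta> F" "r \<le> K"
  obtains a where "qdF F d (z r) = a * qF F (z r)" "\<epsilon> \<le> a" "a \<le> 1 - \<epsilon>"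
proof (cases "d = 1")
  case True
  then show thesis
    using assms by (intro that[of "pF F (z r)"]) (auto simp: qdF_def inP_def)
next
  case False
  then show thesis
    using assms by (intro that[of "1 - pF F (z r)"]) (auto simp: qdF_def inP_def)
qed

lemma inP_variance_weight_ge:
  assumes "inP K z \<delta> \<zeta> \<epsilon> \<Theta> \<theta> F" "0 < \<epsilon>" "d \<in> {0, 1}" "r \<le> K"
  shows "\<epsilon> \<le> sigma2F F d (z r) / qdF F d (z r)"
proof -
  obtain a where a: "qdF F d (z r) = a * qF F (z r)" "\<epsilon> \<le> a" "a \<le> 1 - \<epsilon>"
    using inP_qdF_factor[OF assms(1,4)] .
  have "\<epsilon> \<le> sigma2F F d (z r)" "\<epsilon> \<le> qF F (z r)" "qF F (z r) \<le> 1 - \<epsilon>"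
    using assms by (auto simp: inP_def)
  moreover have "sigma2F F d (z r) \<le> sigma2F F d (z r) / (a * qF F (z r))"
    using a calculation assms(2) by (intro le_divide_mult_of_le_one) auto
  ultimately show ?thesis
    using a(1) by simp
qed

lemma inP_variance_weight_le:
  assumes "inP K z \<delta> \<zeta> \<epsilon> \<Theta> \<theta> F" "0 < \<epsilon>" "0 < \<delta>" "0 \<le> \<zeta>" "d \<in> {0, 1}" "r \<le> K"
  shows "sigma2F F d (z r) / qdF F d (z r) \<le> (2 + 8 * (norm \<theta>)\<^sup>2 + 2 * \<zeta>) / \<epsilon>\<^sup>2"
proof -
  obtain a where a: "qdF F d (z r) = a * qF F (z r)" "\<epsilon> \<le> a"
    using inP_qdF_factor[OF assms(1,6)] by blast
  have "\<epsilon> \<le> sigma2F F d (z r)" "\<epsilon> \<le> qF F (z r)"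
    using assms by (auto simp: inP_def)
  then show ?thesis
    unfolding a(1) using a(2) assms(2) inP_sigma2F_le[OF assms]
    by (intro divide_mult_le_divide_square) auto
qed

lemma inP_propensity_weight_bounds:
  assumes "inP K z \<delta> \<zeta> \<epsilon> \<Theta> \<theta> F" "0 < \<epsilon>" "r \<le> K"
  shows "0 \<le> pF F (z r) * (1 - pF F (z r)) / qF F (z r)"
    and "pF F (z r) * (1 - pF F (z r)) / qF F (z r) \<le> 1 / \<epsilon>"
proof -
  have p: "\<epsilon> \<le> pF F (z r)" "pF F (z r) \<le> 1 - \<epsilon>" "\<epsilon> \<le> qF F (z r)"
    using assms by (auto simp: inP_def)
  then have "0 \<le> pF F (z r) * (1 - pF F (z r))" "pF F (z r) * (1 - pF F (z r)) \<le> 1"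
    using assms(2) by (auto intro: mult_le_one)
  then show "0 \<le> pF F (z r) * (1 - pF F (z r)) / qF F (z r)"
    and "pF F (z r) * (1 - pF F (z r)) / qF F (z r) \<le> 1 / \<epsilon>"
    using p assms(2) by (auto intro: frac_le)
qed

lemma inP_abs_Jacobian_le:
  fixes cm cr :: real
  assumes "inP K z \<delta> \<zeta> \<epsilon> \<Theta> \<theta> F" "0 < \<epsilon>" "norm \<theta> \<le> B" "0 < k" "k \<le> K"
  defines "l \<equiv> c_theta cm cr \<theta>" and "p \<equiv> \<lambda>r. pF F (z r)"
    and "b1 \<equiv> \<lambda>r. betaF F 1 (z r)" and "b0 \<equiv> \<lambda>r. betaF F 0 (z r)"
  shows "\<bar>Jp cm cr l p b1 b0 k r\<bar> \<le> (\<bar>cm\<bar> + \<bar>cr\<bar>) * (6 * B + 2)"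
    and "\<bar>Jb1 cm cr l p b1 b0 k r\<bar> \<le> (\<bar>cm\<bar> + \<bar>cr\<bar>) * (6 * B + 2)"
    and "\<bar>Jb0 cm cr l p b1 b0 k r\<bar> \<le> (\<bar>cm\<bar> + \<bar>cr\<bar>) * (6 * B + 2)"
proof -
  have "0 \<le> B"
    using assms(3) norm_ge_zero by (rule order_trans[rotated])
  then have nonneg: "0 \<le> \<bar>cm\<bar> * B" "0 \<le> \<bar>cr\<bar> * B"
    by simp_all
  have "\<bar>b1 r\<bar> \<le> 2 * B \<and> \<bar>b0 r\<bar> \<le> 2 * B" if "r \<le> K" for r
    using inP_abs_betaF_le[OF assms(1,2) _ that] assms(3) unfolding b1_def b0_def by force
  then have D: "\<bar>b1 r - b0 r\<bar> \<le> 4 * B" if "r \<le> K" for r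
    using that by fastforce
  have "\<bar>l\<bar> \<le> 2 * (\<bar>cm\<bar> + \<bar>cr\<bar>) * B"
    unfolding l_def using abs_c_theta_le[of cm cr \<theta>] assms(3)
    by (meson abs_ge_zero add_nonneg_nonneg mult_left_mono order_trans zero_le_numeral mult_nonneg_nonneg)
  then have "\<bar>l\<bar> + \<bar>cm\<bar> * (4 * B) \<le> (\<bar>cm\<bar> + \<bar>cr\<bar>) * (6 * B + 2)"
    using nonneg by (simp add: algebra_simps) linarith
  moreover have "\<bar>Jp cm cr l p b1 b0 k r\<bar> \<le> \<bar>l\<bar> + \<bar>cm\<bar> * (4 * B)"
    using assms(4,5) D[of 0] D[of k] by (intro abs_Jp_le) auto
  ultimately show "\<bar>Jp cm cr l p b1 b0 k r\<bar> \<le> (\<bar>cm\<bar> + \<bar>cr\<bar>) * (6 * B + 2)"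
    by linarith
  have "\<bar>cm\<bar> + 2 * \<bar>cr\<bar> \<le> (\<bar>cm\<bar> + \<bar>cr\<bar>) * (6 * B + 2)"
    using nonneg by (simp add: algebra_simps)
  moreover have "p 0 \<in> {0..1}" "p k \<in> {0..1}"
    using assms(1,2,5) unfolding inP_def p_def by force+
  ultimately show "\<bar>Jb1 cm cr l p b1 b0 k r\<bar> \<le> (\<bar>cm\<bar> + \<bar>cr\<bar>) * (6 * B + 2)"
    and "\<bar>Jb0 cm cr l p b1 b0 k r\<bar> \<le> (\<bar>cm\<bar> + \<bar>cr\<bar>) * (6 * B + 2)"
    using abs_Jb1_le[of k p cm cr l b1 b0 r] abs_Jb0_le[of k p cm cr l b1 b0 r] assms(4)
    by fastforce+
qed

lemma S_mat_eigenvalue_ge: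
  assumes "inP K z \<delta> \<zeta> \<epsilon> \<Theta> \<theta> F" "0 < \<epsilon>" "eigenvalue (S_mat K z cm cr \<theta> F) e"
  shows "\<epsilon> * (if cm = 0 then 8 * cr\<^sup>2 else cm\<^sup>2 / 2) \<le> e"
proof -
  let ?l = "c_theta cm cr \<theta>" and ?p = "\<lambda>r. pF F (z r)"
    and ?b1 = "\<lambda>r. betaF F 1 (z r)" and ?b0 = "\<lambda>r. betaF F 0 (z r)"
  let ?Y1 = "- cm * (1 - ?p 0) - 2 * cr" and ?Y0 = "2 * cr - cm * ?p 0"
  let ?Q = "\<lambda>w J x. \<Sum>r\<le>K. w r * (\<Sum>i<K. x i * J (i + 1) r)\<^sup>2"
  define L where "L = \<epsilon> * (?Y1\<^sup>2 + ?Y0\<^sup>2)"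
  have quad: "L * (\<Sum>i<K. (x i)\<^sup>2)
      \<le> ?Q (\<lambda>r. ?p r * (1 - ?p r) / qF F (z r)) (Jp cm cr ?l ?p ?b1 ?b0) x
       + ?Q (\<lambda>r. sigma2F F 1 (z r) / qdF F 1 (z r)) (Jb1 cm cr ?l ?p ?b1 ?b0) x
       + ?Q (\<lambda>r. sigma2F F 0 (z r) / qdF F 0 (z r)) (Jb0 cm cr ?l ?p ?b1 ?b0) x" for x
  proof -
    have "0 \<le> ?Q (\<lambda>r. ?p r * (1 - ?p r) / qF F (z r)) (Jp cm cr ?l ?p ?b1 ?b0) x"
      using inP_propensity_weight_bounds(1)[OF assms(1,2)]
      by (intro sum_nonneg mult_nonneg_nonneg zero_le_power2) auto
    moreover have "\<epsilon> * ?Y1\<^sup>2 * (\<Sum>i<K. (x i)\<^sup>2)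
        \<le> ?Q (\<lambda>r. sigma2F F 1 (z r) / qdF F 1 (z r)) (Jb1 cm cr ?l ?p ?b1 ?b0) x"
      using assms(1,2) by (intro weighted_square_sum_ge_diagonal) (auto simp: Jb1_eq inP_variance_weight_ge)
    moreover have "\<epsilon> * ?Y0\<^sup>2 * (\<Sum>i<K. (x i)\<^sup>2)
        \<le> ?Q (\<lambda>r. sigma2F F 0 (z r) / qdF F 0 (z r)) (Jb0 cm cr ?l ?p ?b1 ?b0) x"
      using assms(1,2) by (intro weighted_square_sum_ge_diagonal) (auto simp: Jb0_eq inP_variance_weight_ge)
    ultimately show ?thesis
      by (simp add: L_def algebra_simps)
  qed
  have "L \<le> e"
    using assms(3) unfolding S_mat_def Let_def
    by (rule eigenvalue_ge_if_quadratic_form_ge)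
       (simp only: distrib_left distrib_right sum.distrib quadratic_form_weighted_gram quad)
  moreover have "\<epsilon> * (if cm = 0 then 8 * cr\<^sup>2 else cm\<^sup>2 / 2) \<le> L"
    unfolding L_def using assms(2) by (intro mult_left_mono Jb_diagonal_sum_squares_ge) auto
  ultimately show ?thesis
    by simp
qed

lemma S_mat_eigenvalue_le:
  assumes "inP K z \<delta> \<zeta> \<epsilon> \<Theta> \<theta> F" "0 < \<epsilon>" "0 < \<delta>" "0 \<le> \<zeta>" "norm \<theta> \<le> B"
    and "eigenvalue (S_mat K z cm cr \<theta> F) e"
  defines "CJ \<equiv> (\<bar>cm\<bar> + \<bar>cr\<bar>) * (6 * B + 2)"
    and "CW \<equiv> max (1 / \<epsilon>) ((2 + 8 * B\<^sup>2 + 2 * \<zeta>) / \<epsilon>\<^sup>2)"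
  shows "\<bar>e\<bar> \<le> real K * (3 * ((real K + 1) * (CJ * CW * CJ)))"
proof -
  let ?l = "c_theta cm cr \<theta>" and ?p = "\<lambda>r. pF F (z r)"
    and ?b1 = "\<lambda>r. betaF F 1 (z r)" and ?b0 = "\<lambda>r. betaF F 0 (z r)"
  have J: "\<bar>Jp cm cr ?l ?p ?b1 ?b0 (i + 1) r\<bar> \<le> CJ" "\<bar>Jb1 cm cr ?l ?p ?b1 ?b0 (i + 1) r\<bar> \<le> CJ"
    "\<bar>Jb0 cm cr ?l ?p ?b1 ?b0 (i + 1) r\<bar> \<le> CJ"
    if "i < K" for i r
    using inP_abs_Jacobian_le[OF assms(1,2,5), of "i + 1"] that unfolding CJ_def by auto
  have "(norm \<theta>)\<^sup>2 \<le> B\<^sup>2"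
    using assms(5) by (simp add: power_mono)
  then have "(2 + 8 * (norm \<theta>)\<^sup>2 + 2 * \<zeta>) / \<epsilon>\<^sup>2 \<le> CW"
    unfolding CW_def by (intro max.coboundedI2 divide_right_mono) auto
  then have Wd: "0 \<le> sigma2F F d (z r) / qdF F d (z r)" "sigma2F F d (z r) / qdF F d (z r) \<le> CW"
    if "r \<le> K" "d \<in> {0, 1}" for r d
    using inP_variance_weight_ge[OF assms(1,2) that(2,1)] inP_variance_weight_le[OF assms(1-4) that(2,1)]
      assms(2) by linarith+
  have Wp: "0 \<le> pF F (z r) * (1 - pF F (z r)) / qF F (z r)"
    "pF F (z r) * (1 - pF F (z r)) / qF F (z r) \<le> CW"
    if "r \<le> K" for r
    using inP_propensity_weight_bounds[OF assms(1,2) that] unfolding CW_def by auto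
  show ?thesis
    using assms(6) unfolding S_mat_def Let_def
    by (rule abs_eigenvalue_le_if_entries_le) (intro abs_add3_le abs_weighted_gram_le J Wp Wd; simp)
qed

theorem lemmaA2:
  fixes K :: nat and z :: "nat \<Rightarrow> 'z"
    and \<delta> \<zeta> \<epsilon> c_mu c_rho :: real
    and \<Theta> :: "((real \<times> real) \<times> (real \<times> real)) set"
  assumes "K \<ge> 1"
    and "inj_on z {0..K}"
    and "\<delta> > 0" and "\<zeta> > 0" and "0 < \<epsilon>" and "\<epsilon> < 1/2"
    and "compact \<Theta>" and "interior \<Theta> \<noteq> {}"
    and "(c_mu, c_rho) \<noteq> (0, 0)"
  shows "(\<exists>lo > 0. \<forall>\<theta> F. inP K z \<delta> \<zeta> \<epsilon> \<Theta> \<theta> F \<longrightarrow>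
            (\<forall>e. eigenvalue (S_mat K z c_mu c_rho \<theta> F) e \<longrightarrow> lo \<le> e))
       \<and> (\<exists>hi. \<forall>\<theta> F. inP K z \<delta> \<zeta> \<epsilon> \<Theta> \<theta> F \<longrightarrow>
            (\<forall>e. eigenvalue (S_mat K z c_mu c_rho \<theta> F) e \<longrightarrow> e \<le> hi))"
proof
  have "0 < \<epsilon> * (if c_mu = 0 then 8 * c_rho\<^sup>2 else c_mu\<^sup>2 / 2)"
    using assms(5,9) by auto
  then show "\<exists>lo > 0. \<forall>\<theta> F. inP K z \<delta> \<zeta> \<epsilon> \<Theta> \<theta> F \<longrightarrow>
      (\<forall>e. eigenvalue (S_mat K z c_mu c_rho \<theta> F) e \<longrightarrow> lo \<le> e)"
    using S_mat_eigenvalue_ge[OF _ assms(5)] by blast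
next
  obtain B where B: "\<And>\<theta>. \<theta> \<in> \<Theta> \<Longrightarrow> norm \<theta> \<le> B"
    using compact_imp_bounded[OF assms(7)] unfolding bounded_iff by blast
  have norm_le: "norm \<theta> \<le> B" if "inP K z \<delta> \<zeta> \<epsilon> \<Theta> \<theta> F" for \<theta> F
  proof -
    have "\<theta> \<in> \<Theta>"
      using that interior_subset unfolding inP_def by blast
    then show ?thesis
      by (rule B)
  qed
  show "\<exists>hi. \<forall>\<theta> F. inP K z \<delta> \<zeta> \<epsilon> \<Theta> \<theta> F \<longrightarrow>
      (\<forall>e. eigenvalue (S_mat K z c_mu c_rho \<theta> F) e \<longrightarrow> e \<le> hi)"
    by (intro exI allI impI, rule abs_le_D1,
        rule S_mat_eigenvalue_le[where \<epsilon> = \<epsilon> and \<zeta> = \<zeta> and B = B])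
       (use assms(3-5) norm_le in auto)
qed

end
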